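(* If $M\Rrightarrow N_1$ and $M\Rrightarrow N_2$, then there exists $N$ such that $N_1\Rrightarrow N$ and $N_2\Rrightarrow N$.
   Context: Terms of $\lambda^{\triangleright}$: transition variables $\alpha,\beta,\dots$; a transition $A,B$ is a finite sequence of transition variables ($\varepsilon$ empty, $AB$ concatenation). Types $\tau ::= b \mid \tau\to\tau \mid \triangleright_\alpha\tau \mid \forall\alpha.\tau$. Terms $M ::= x \mid M\,M \mid \lambda x{:}\tau.M \mid \blacktriangleright_\alpha M \mid \blacktriangleleft_\alpha M \mid \Lambda\alpha.M \mid M\,A$ (quotation, unquotation, transition abstraction, instantiation by a transition); $x$ is bound in $\lambda x{:}\tau.M$ and $\alpha$ in $\Lambda\alpha.M$. For $A=\alpha_1\cdots\alpha_n$: $\blacktriangleright_A M=\blacktriangleright_{\alpha_1}\cdots\blacktriangleright_{\alpha_n}M$, $\blacktriangleleft_A M=\blacktriangleleft_{\alpha_n}\cdots\blacktriangleleft_{\alpha_1}M$ (identity when $A=\varepsilon$), and similarly $\triangleright_A\tau$. $M[x:=N]$ is capture-avoiding term substitution; $M[\alpha:=B]$ is capture-avoiding substitution of a transition $B$ for $\alpha$, replacing $\alpha$ by $B$ in transitions and $\triangleright_\alpha,\blacktriangleright_\alpha,\blacktriangleleft_\alpha$ by $\triangleright_B,\blacktriangleright_B,\blacktriangleleft_B$. Parallel reduction $M\Rrightarrow N$ is inductively defined by: $x\Rrightarrow x$; $M\Rrightarrow N\Rightarrow \lambda x{:}\tau.M\Rrightarrow\lambda x{:}\tau.N$; $M_1\Rrightarrow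 N_1, M_2\Rrightarrow N_2\Rightarrow M_1M_2\Rrightarrow N_1N_2$; $M_1\Rrightarrow N_1, M_2\Rrightarrow N_2\Rightarrow(\lambda x{:}\tau.M_1)M_2\Rrightarrow N_1[x:=N_2]$; $M\Rrightarrow N\Rightarrow\Lambda\alpha.M\Rrightarrow\Lambda\alpha.N$; $M\Rrightarrow N\Rightarrow M\,A\Rrightarrow N\,A$; $M\Rrightarrow N\Rightarrow(\Lambda\alpha.M)\,A\Rrightarrow N[\alpha:=A]$; $M\Rrightarrow N\Rightarrow\blacktriangleright_\alpha M\Rrightarrow\blacktriangleright_\alpha N$; $M\Rrightarrow N\Rightarrow\blacktriangleleft_\alpha M\Rrightarrow\blacktriangleleft_\alpha N$; and, for any transition $A$, $M\Rrightarrow N\Rightarrow\blacktriangleleft_A\blacktriangleright_A M\Rrightarrow N$. *)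

theory Defs
  imports Main
begin

text \<open>We use de Bruijn indices for both sorts of
variables (term variables and transition variables live in separate index
namespaces).\<close>

type_synonym tvar = nat
type_synonym transition = "tvar list"   \<comment> \<open>finite sequence of transition variables; [] = epsilon\<close>

datatype ty =
    TBase nat
  | TArr ty ty
  | TNext tvar ty
  | TAll ty              \<comment> \<open>\<forall>\<alpha>. \<tau>, binds transition index 0\<close>

datatype trm =
    Var nat
  | App trm trm
  | Lam ty trm           \<comment> \<open>\<lambda>x:\<tau>. M, binds term index 0\<close>
  | Quote tvar trm
  | Unquote tvar trm
  | TLam trm             \<comment> \<open>\<Lambda>\<alpha>. M, binds transition index 0\<close>
  | TApp trm transition

text \<open>Iterated constructs: for A = a1...an,
  \<triangleright>_A \<tau> = \<triangleright>_a1 ... \<triangleright>_an \<tau>,  \<blacktriangleright>_A M = \<blacktriangleright>_a1 ... \<blacktriangleright>_an M,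
  \<blacktriangleleft>_A M = \<blacktriangleleft>_an ... \<blacktriangleleft>_a1 M.\<close>

definition tnexts :: "transition \<Rightarrow> ty \<Rightarrow> ty" where
  "tnexts A \<tau> = foldr TNext A \<tau>"

definition quotes :: "transition \<Rightarrow> trm \<Rightarrow> trm" where
  "quotes A M = foldr Quote A M"

definition unquotes :: "transition \<Rightarrow> trm \<Rightarrow> trm" where
  "unquotes A M = foldl (\<lambda>N a. Unquote a N) M A"

definition lift_tr :: "nat \<Rightarrow> transition \<Rightarrow> transition" where
  "lift_tr c A = map (\<lambda>i. if i < c then i else Suc i) A"

definition subst_tr :: "nat \<Rightarrow> transition \<Rightarrow> transition \<Rightarrow> transition" where
  "subst_tr k B A = concat (map (\<lambda>i. if i = k then B else if i < k then [i] else [i - 1]) A)"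

fun lift_ty :: "nat \<Rightarrow> ty \<Rightarrow> ty" where
  "lift_ty c (TBase b) = TBase b"
| "lift_ty c (TArr s t) = TArr (lift_ty c s) (lift_ty c t)"
| "lift_ty c (TNext i t) = TNext (if i < c then i else Suc i) (lift_ty c t)"
| "lift_ty c (TAll t) = TAll (lift_ty (Suc c) t)"

fun subst_ty :: "nat \<Rightarrow> transition \<Rightarrow> ty \<Rightarrow> ty" where
  "subst_ty k B (TBase b) = TBase b"
| "subst_ty k B (TArr s t) = TArr (subst_ty k B s) (subst_ty k B t)"
| "subst_ty k B (TNext i t) = tnexts (subst_tr k B [i]) (subst_ty k B t)"
| "subst_ty k B (TAll t) = TAll (subst_ty (Suc k) (lift_tr 0 B) t)"

fun tv_lift :: "nat \<Rightarrow> trm \<Rightarrow> trm" where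
  "tv_lift c (Var x) = Var x"
| "tv_lift c (App M N) = App (tv_lift c M) (tv_lift c N)"
| "tv_lift c (Lam t M) = Lam (lift_ty c t) (tv_lift c M)"
| "tv_lift c (Quote i M) = Quote (if i < c then i else Suc i) (tv_lift c M)"
| "tv_lift c (Unquote i M) = Unquote (if i < c then i else Suc i) (tv_lift c M)"
| "tv_lift c (TLam M) = TLam (tv_lift (Suc c) M)"
| "tv_lift c (TApp M A) = TApp (tv_lift c M) (lift_tr c A)"

fun tv_subst :: "nat \<Rightarrow> transition \<Rightarrow> trm \<Rightarrow> trm" where
  "tv_subst k B (Var x) = Var x"
| "tv_subst k B (App M N) = App (tv_subst k B M) (tv_subst k B N)"
| "tv_subst k B (Lam t M) = Lam (subst_ty k B t) (tv_subst k B M)"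
| "tv_subst k B (Quote i M) = quotes (subst_tr k B [i]) (tv_subst k B M)"
| "tv_subst k B (Unquote i M) = unquotes (subst_tr k B [i]) (tv_subst k B M)"
| "tv_subst k B (TLam M) = TLam (tv_subst (Suc k) (lift_tr 0 B) M)"
| "tv_subst k B (TApp M A) = TApp (tv_subst k B M) (subst_tr k B A)"

fun lift :: "nat \<Rightarrow> trm \<Rightarrow> trm" where
  "lift c (Var x) = Var (if x < c then x else Suc x)"
| "lift c (App M N) = App (lift c M) (lift c N)"
| "lift c (Lam t M) = Lam t (lift (Suc c) M)"
| "lift c (Quote i M) = Quote i (lift c M)"
| "lift c (Unquote i M) = Unquote i (lift c M)"
| "lift c (TLam M) = TLam (lift c M)"
| "lift c (TApp M A) = TApp (lift c M) A"

fun subst :: "nat \<Rightarrow> trm \<Rightarrow> trm \<Rightarrow> trm" where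
  "subst k N (Var x) = (if x = k then N else if x < k then Var x else Var (x - 1))"
| "subst k N (App M1 M2) = App (subst k N M1) (subst k N M2)"
| "subst k N (Lam t M) = Lam t (subst (Suc k) (lift 0 N) M)"
| "subst k N (Quote i M) = Quote i (subst k N M)"
| "subst k N (Unquote i M) = Unquote i (subst k N M)"
| "subst k N (TLam M) = TLam (subst k (tv_lift 0 N) M)"
| "subst k N (TApp M A) = TApp (subst k N M) A"

inductive par_red :: "trm \<Rightarrow> trm \<Rightarrow> bool" (infix "\<Rrightarrow>" 50) where
  pr_var:     "Var x \<Rrightarrow> Var x"
| pr_lam:     "M \<Rrightarrow> N \<Longrightarrow> Lam t M \<Rrightarrow> Lam t N"
| pr_app:     "M1 \<Rrightarrow> N1 \<Longrightarrow> M2 \<Rrightarrow> N2 \<Longrightarrow> App M1 M2 \<Rrightarrow> App N1 N2"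
| pr_beta:    "M1 \<Rrightarrow> N1 \<Longrightarrow> M2 \<Rrightarrow> N2 \<Longrightarrow> App (Lam t M1) M2 \<Rrightarrow> subst 0 N2 N1"
| pr_tlam:    "M \<Rrightarrow> N \<Longrightarrow> TLam M \<Rrightarrow> TLam N"
| pr_tapp:    "M \<Rrightarrow> N \<Longrightarrow> TApp M A \<Rrightarrow> TApp N A"
| pr_tbeta:   "M \<Rrightarrow> N \<Longrightarrow> TApp (TLam M) A \<Rrightarrow> tv_subst 0 A N"
| pr_quote:   "M \<Rrightarrow> N \<Longrightarrow> Quote a M \<Rrightarrow> Quote a N"
| pr_unquote: "M \<Rrightarrow> N \<Longrightarrow> Unquote a M \<Rrightarrow> Unquote a N"
| pr_qu:      "M \<Rrightarrow> N \<Longrightarrow> unquotes A (quotes A M) \<Rrightarrow> N"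

end

theory Submission
  imports Defs
begin

(*
  Confluence of parallel reduction: the diamond property, proved in the style of
  Tait and Martin-Loef by induction on the size of the source term.

  Both transition shifting
  and substitution of a transition for a transition variable are instances of one
  simultaneous substitution, which maps every transition variable to a
  transition; these substitutions compose, which yields all commutation laws at
  once.  The only non-syntactic rule is the cancellation of a redex
  unquotes A (quotes A M); we show that such redexes decompose uniquely and that
  every parallel reduct of one is again such a redex around a reduct of M.
*)

lemma quotes_simps [simp]:
  "quotes [] M = M" "quotes (a # A) M = Quote a (quotes A M)"
  by (simp_all add: quotes_def)

lemma unquotes_simps [simp]:
  "unquotes [] M = M" "unquotes (a # A) M = unquotes A (Unquote a M)"
  by (simp_all add: unquotes_def)

lemma tnexts_simps [simp]:
  "tnexts [] t = t" "tnexts (a # A) t = TNext a (tnexts A t)"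
  by (simp_all add: tnexts_def)

lemma quotes_append [simp]: "quotes (A @ B) M = quotes A (quotes B M)"
  by (induct A) auto

lemma unquotes_append [simp]: "unquotes (A @ B) M = unquotes B (unquotes A M)"
  by (induct A arbitrary: M) auto

lemma tnexts_append [simp]: "tnexts (A @ B) t = tnexts A (tnexts B t)"
  by (induct A) auto

lemma unquotes_last: "A \<noteq> [] \<Longrightarrow> unquotes A M = Unquote (last A) (unquotes (butlast A) M)"
  by (metis append_butlast_last_id unquotes_append unquotes_simps)

lemma quotes_hd: "A \<noteq> [] \<Longrightarrow> quotes A M = Quote (hd A) (quotes (tl A) M)"
  by (cases A) auto

lemma size_quotes [simp]: "size (quotes A M) = size M + length A"
  by (induct A) auto

lemma size_unquotes [simp]: "size (unquotes A M) = size M + length A"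
  by (induct A arbitrary: M) auto

section \<open>Simultaneous substitution of transitions\<close>

type_synonym trans_subst = "nat \<Rightarrow> transition"

definition tup :: "trans_subst \<Rightarrow> trans_subst" where
  "tup \<sigma> i = (case i of 0 \<Rightarrow> [0] | Suc j \<Rightarrow> map Suc (\<sigma> j))"

lemma tup_simps [simp]: "tup \<sigma> 0 = [0]" "tup \<sigma> (Suc j) = map Suc (\<sigma> j)"
  by (simp_all add: tup_def)

fun tsubst_ty :: "trans_subst \<Rightarrow> ty \<Rightarrow> ty" where
  "tsubst_ty \<sigma> (TBase b) = TBase b"
| "tsubst_ty \<sigma> (TArr s t) = TArr (tsubst_ty \<sigma> s) (tsubst_ty \<sigma> t)"
| "tsubst_ty \<sigma> (TNext i t) = tnexts (\<sigma> i) (tsubst_ty \<sigma> t)"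
| "tsubst_ty \<sigma> (TAll t) = TAll (tsubst_ty (tup \<sigma>) t)"

fun tsubst :: "trans_subst \<Rightarrow> trm \<Rightarrow> trm" where
  "tsubst \<sigma> (Var x) = Var x"
| "tsubst \<sigma> (App M N) = App (tsubst \<sigma> M) (tsubst \<sigma> N)"
| "tsubst \<sigma> (Lam t M) = Lam (tsubst_ty \<sigma> t) (tsubst \<sigma> M)"
| "tsubst \<sigma> (Quote i M) = quotes (\<sigma> i) (tsubst \<sigma> M)"
| "tsubst \<sigma> (Unquote i M) = unquotes (\<sigma> i) (tsubst \<sigma> M)"
| "tsubst \<sigma> (TLam M) = TLam (tsubst (tup \<sigma>) M)"
| "tsubst \<sigma> (TApp M A) = TApp (tsubst \<sigma> M) (concat (map \<sigma> A))"

definition tsingle :: "nat \<Rightarrow> transition \<Rightarrow> trans_subst" where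
  "tsingle k B i = (if i = k then B else if i < k then [i] else [i - 1])"

definition tshift :: "nat \<Rightarrow> trans_subst" where
  "tshift c i = [if i < c then i else Suc i]"

definition tcomp :: "trans_subst \<Rightarrow> trans_subst \<Rightarrow> trans_subst" where
  "tcomp \<sigma> \<tau> i = concat (map \<sigma> (\<tau> i))"

lemma tup_tsingle: "tup (tsingle k B) = tsingle (Suc k) (lift_tr 0 B)"
  by (auto simp: fun_eq_iff tup_def tsingle_def lift_tr_def split: nat.split)

lemma tup_tshift: "tup (tshift c) = tshift (Suc c)"
  by (auto simp: fun_eq_iff tup_def tshift_def split: nat.split)

lemma tup_id: "tup (\<lambda>i. [i]) = (\<lambda>i. [i])"
  by (auto simp: fun_eq_iff tup_def split: nat.split)

lemma tup_tcomp: "tup (tcomp \<sigma> \<tau>) = tcomp (tup \<sigma>) (tup \<tau>)"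
  by (auto simp: fun_eq_iff tup_def tcomp_def map_concat o_def split: nat.split)

lemma subst_tr_tsingle: "subst_tr k B A = concat (map (tsingle k B) A)"
  unfolding subst_tr_def tsingle_def by (rule refl)

lemma lift_tr_tshift: "lift_tr c A = concat (map (tshift c) A)"
  by (induct A) (auto simp: lift_tr_def tshift_def)

lemma subst_ty_tsubst: "subst_ty k B t = tsubst_ty (tsingle k B) t"
  by (induct t arbitrary: k B) (auto simp: tup_tsingle subst_tr_tsingle)

lemma tv_subst_tsubst: "tv_subst k B M = tsubst (tsingle k B) M"
  by (induct M arbitrary: k B) (auto simp: tup_tsingle subst_tr_tsingle subst_ty_tsubst)

lemma lift_ty_tsubst: "lift_ty c t = tsubst_ty (tshift c) t"
  by (induct t arbitrary: c) (auto simp: tup_tshift tshift_def)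

lemma tv_lift_tsubst: "tv_lift c M = tsubst (tshift c) M"
  by (induct M arbitrary: c) (auto simp: tup_tshift tshift_def lift_ty_tsubst lift_tr_tshift)

lemma tsubst_quotes [simp]: "tsubst \<sigma> (quotes A M) = quotes (concat (map \<sigma> A)) (tsubst \<sigma> M)"
  by (induct A) auto

lemma tsubst_unquotes [simp]:
  "tsubst \<sigma> (unquotes A M) = unquotes (concat (map \<sigma> A)) (tsubst \<sigma> M)"
  by (induct A arbitrary: M) auto

lemma tsubst_ty_tnexts [simp]:
  "tsubst_ty \<sigma> (tnexts A t) = tnexts (concat (map \<sigma> A)) (tsubst_ty \<sigma> t)"
  by (induct A) auto

lemma concat_map_tcomp: "concat (map \<sigma> (concat (map \<tau> A))) = concat (map (tcomp \<sigma> \<tau>) A)"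
  by (induct A) (auto simp: tcomp_def)

lemma tsubst_ty_tsubst_ty: "tsubst_ty \<sigma> (tsubst_ty \<tau> t) = tsubst_ty (tcomp \<sigma> \<tau>) t"
  by (induct t arbitrary: \<sigma> \<tau>) (auto simp: tup_tcomp tcomp_def)

lemma tsubst_tsubst: "tsubst \<sigma> (tsubst \<tau> M) = tsubst (tcomp \<sigma> \<tau>) M"
  by (induct M arbitrary: \<sigma> \<tau>) (auto simp: tup_tcomp tcomp_def tsubst_ty_tsubst_ty concat_map_tcomp)

lemma tsubst_ty_id: "tsubst_ty (\<lambda>i. [i]) t = t"
  by (induct t) (auto simp: tup_id)

lemma tsubst_id: "tsubst (\<lambda>i. [i]) M = M"
  by (induct M) (auto simp: tup_id tsubst_ty_id)

lemma tsubst_tup_tv_lift: "tsubst (tup \<sigma>) (tv_lift 0 N) = tv_lift 0 (tsubst \<sigma> N)"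
proof -
  have "tcomp (tup \<sigma>) (tshift 0) = tcomp (tshift 0) \<sigma>"
    by (rule ext) (simp add: tcomp_def tshift_def map_concat o_def lift_tr_tshift[symmetric] lift_tr_def)
  then show ?thesis by (simp add: tv_lift_tsubst tsubst_tsubst)
qed

lemma tv_subst_tv_lift: "tv_subst 0 A (tv_lift 0 N) = N"
proof -
  have "tcomp (tsingle 0 A) (tshift 0) = (\<lambda>i. [i])"
    by (rule ext) (simp add: tcomp_def tsingle_def tshift_def)
  then show ?thesis by (simp add: tv_subst_tsubst tv_lift_tsubst tsubst_tsubst tsubst_id)
qed

lemma tcomp_tsingle0: "tcomp \<sigma> (tsingle 0 A) = tcomp (tsingle 0 (concat (map \<sigma> A))) (tup \<sigma>)"
proof (rule ext)
  fix i
  have cancel: "concat (map (\<lambda>j. tsingle 0 B (Suc j)) xs) = xs" for B xs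
    by (induct xs) (auto simp: tsingle_def)
  show "tcomp \<sigma> (tsingle 0 A) i = tcomp (tsingle 0 (concat (map \<sigma> A))) (tup \<sigma>) i"
    by (cases i) (simp_all add: tcomp_def tsingle_def map_concat o_def cancel)
qed

lemma lift_quotes [simp]: "lift c (quotes A M) = quotes A (lift c M)"
  by (induct A) auto

lemma lift_unquotes [simp]: "lift c (unquotes A M) = unquotes A (lift c M)"
  by (induct A arbitrary: M) auto

lemma subst_quotes [simp]: "subst c N (quotes A M) = quotes A (subst c N M)"
  by (induct A) auto

lemma subst_unquotes [simp]: "subst c N (unquotes A M) = unquotes A (subst c N M)"
  by (induct A arbitrary: M) auto

text \<open>Term and transition operations act on disjoint variable namespaces and commute.\<close>

lemma lift_tsubst: "lift c (tsubst \<sigma> M) = tsubst \<sigma> (lift c M)"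
  by (induct M arbitrary: c \<sigma>) auto

lemma tsubst_subst: "tsubst \<sigma> (subst j N M) = subst j (tsubst \<sigma> N) (tsubst \<sigma> M)"
  by (induct M arbitrary: \<sigma> j N) (auto simp: lift_tsubst tsubst_tup_tv_lift)

lemma lift_tv_lift: "lift c (tv_lift d N) = tv_lift d (lift c N)"
  by (simp add: tv_lift_tsubst lift_tsubst)

lemma tv_lift_subst: "tv_lift d (subst j v u) = subst j (tv_lift d v) (tv_lift d u)"
  by (simp add: tv_lift_tsubst tsubst_subst)

lemma lift_lift: "i \<le> k \<Longrightarrow> lift (Suc k) (lift i t) = lift i (lift k t)"
  by (induct t arbitrary: i k) auto

lemma lift_subst_ge: "j \<le> i \<Longrightarrow> lift i (subst j s t) = subst j (lift i s) (lift (Suc i) t)"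
  by (induct t arbitrary: i j s) (auto simp: lift_lift lift_tv_lift)

lemma lift_subst_le: "i \<le> j \<Longrightarrow> lift i (subst j s t) = subst (Suc j) (lift i s) (lift i t)"
  by (induct t arbitrary: i j s) (auto simp: lift_lift lift_tv_lift)

lemma subst_lift [simp]: "subst k s (lift k t) = t"
  by (induct t arbitrary: k s) auto

lemma subst_subst:
  "i \<le> j \<Longrightarrow> subst i (subst j v u) (subst (Suc j) (lift i v) t) = subst j v (subst i u t)"
proof (induct t arbitrary: i j u v)
  case (Lam t M)
  have "lift 0 (lift i v) = lift (Suc i) (lift 0 v)" using lift_lift[of 0 i v] by simp
  then show ?case using Lam by (simp add: lift_subst_le)
next
  case (TLam M)
  have "tv_lift 0 (lift i v) = lift i (tv_lift 0 v)" by (simp add: lift_tv_lift)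
  then show ?case using TLam by (simp add: tv_lift_subst)
qed auto

section \<open>Stability of parallel reduction\<close>

lemma par_refl [simp, intro]: "M \<Rrightarrow> M"
  by (induct M) (auto intro: par_red.intros)

lemma par_quotes: "M \<Rrightarrow> N \<Longrightarrow> quotes A M \<Rrightarrow> quotes A N"
  by (induct A) (auto intro: par_red.intros)

lemma par_unquotes: "M \<Rrightarrow> N \<Longrightarrow> unquotes A M \<Rrightarrow> unquotes A N"
  by (induct A arbitrary: M N) (auto intro: par_red.intros)

lemma par_lift: "M \<Rrightarrow> N \<Longrightarrow> lift c M \<Rrightarrow> lift c N"
proof (induct arbitrary: c rule: par_red.induct)
  case (pr_beta M1 N1 M2 N2 t)
  then show ?case
    using par_red.pr_beta[of "lift (Suc c) M1" "lift (Suc c) N1" "lift c M2" "lift c N2" t]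
    by (simp add: lift_subst_ge)
next
  case (pr_tbeta M N A)
  then show ?case using par_red.pr_tbeta[of "lift c M" "lift c N" A]
    by (simp add: tv_subst_tsubst lift_tsubst)
qed (auto intro: par_red.intros)

lemma par_tsubst: "M \<Rrightarrow> N \<Longrightarrow> tsubst \<sigma> M \<Rrightarrow> tsubst \<sigma> N"
proof (induct arbitrary: \<sigma> rule: par_red.induct)
  case (pr_beta M1 N1 M2 N2 t)
  then show ?case by (simp add: tsubst_subst par_red.pr_beta)
next
  case (pr_tbeta M N A)
  have "tsubst \<sigma> (tsubst (tsingle 0 A) N)
          = tsubst (tsingle 0 (concat (map \<sigma> A))) (tsubst (tup \<sigma>) N)"
    by (simp add: tsubst_tsubst tcomp_tsingle0)
  then show ?case
    using pr_tbeta par_red.pr_tbeta[of "tsubst (tup \<sigma>) M" "tsubst (tup \<sigma>) N" "concat (map \<sigma> A)"]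
    by (simp add: tv_subst_tsubst)
qed (auto intro: par_red.intros par_quotes par_unquotes)

lemma par_tv_subst: "M \<Rrightarrow> N \<Longrightarrow> tv_subst k A M \<Rrightarrow> tv_subst k A N"
  by (simp add: tv_subst_tsubst par_tsubst)

lemma par_tv_lift: "M \<Rrightarrow> N \<Longrightarrow> tv_lift c M \<Rrightarrow> tv_lift c N"
  by (simp add: tv_lift_tsubst par_tsubst)

lemma par_subst: "M \<Rrightarrow> M' \<Longrightarrow> N \<Rrightarrow> N' \<Longrightarrow> subst k N M \<Rrightarrow> subst k N' M'"
proof (induct arbitrary: k N N' rule: par_red.induct)
  case (pr_lam M M2 t)
  then show ?case by (simp add: par_red.pr_lam par_lift)
next
  case (pr_tlam M M2)
  then show ?case by (simp add: par_red.pr_tlam par_tv_lift)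
next
  case (pr_beta M1 N1 M2 N2 t)
  have "subst k N (App (Lam t M1) M2) \<Rrightarrow> subst 0 (subst k N' N2) (subst (Suc k) (lift 0 N') N1)"
    using pr_beta by (auto intro!: par_red.pr_beta par_lift)
  then show ?case using subst_subst[of 0 k N' N2 N1] by simp
next
  case (pr_tbeta M M2 A)
  have "subst k N (TApp (TLam M) A) \<Rrightarrow> tv_subst 0 A (subst k (tv_lift 0 N') M2)"
    using pr_tbeta by (auto intro!: par_red.pr_tbeta par_tv_lift)
  then show ?case
    by (simp add: tv_subst_tsubst tsubst_subst tv_subst_tv_lift[unfolded tv_subst_tsubst])
qed (auto intro: par_red.intros)

section \<open>Quote-unquote redexes\<close>

lemma unquotes_prefix:
  "length A \<le> length C \<Longrightarrow> unquotes A Y = unquotes C Z \<Longrightarrow> \<exists>C1. C = C1 @ A \<and> Y = unquotes C1 Z"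
proof (induct A arbitrary: C rule: rev_induct)
  case (snoc a A)
  then obtain C' c where "C = C' @ [c]"
    by (metis length_greater_0_conv less_le_trans length_append_singleton rev_exhaust zero_less_Suc)
  with snoc show ?case by auto
qed simp

lemma quotes_inj: "length A = length C \<Longrightarrow> quotes A P = quotes C Q \<Longrightarrow> A = C \<and> P = Q"
proof (induct A arbitrary: C)
  case (Cons a A)
  then obtain c C' where "C = c # C'" by (cases C) auto
  with Cons show ?case by auto
qed simp

lemma qu_redex_unique_le:
  assumes "A \<noteq> []" "length A \<le> length C" "unquotes A (quotes A P) = unquotes C (quotes C Q)"
  shows "A = C \<and> P = Q"
proof -
  obtain C1 where C: "C = C1 @ A" and eq: "quotes A P = unquotes C1 (quotes C Q)"
    using unquotes_prefix[OF assms(2,3)] by blast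
  show ?thesis
  proof (cases "C1 = []")
    case True then show ?thesis using eq C quotes_inj by auto
  next
    case False then show ?thesis using eq assms(1) by (simp add: unquotes_last quotes_hd)
  qed
qed

lemma qu_redex_unique:
  "A \<noteq> [] \<Longrightarrow> C \<noteq> [] \<Longrightarrow> unquotes A (quotes A P) = unquotes C (quotes C Q) \<Longrightarrow> A = C \<and> P = Q"
  by (metis qu_redex_unique_le nat_le_linear)

text \<open>Apart from Unquote, a constructor at the root can only reduce by its own
  congruence or beta rule, since a nonempty redex always starts with Unquote.\<close>

lemma par_Var_inv: "Var x \<Rrightarrow> N \<Longrightarrow> N = Var x"
proof (induct "Var x" N rule: par_red.induct)
  case (pr_qu M N A) then show ?case by (cases "A = []") (auto simp: unquotes_last)
qed auto

lemma par_Lam_inv: "Lam t X \<Rrightarrow> N \<Longrightarrow> \<exists>X'. N = Lam t X' \<and> X \<Rrightarrow> X'"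
proof (induct "Lam t X" N arbitrary: X rule: par_red.induct)
  case (pr_qu M N A) then show ?case by (cases "A = []") (auto simp: unquotes_last)
qed auto

lemma par_TLam_inv: "TLam X \<Rrightarrow> N \<Longrightarrow> \<exists>X'. N = TLam X' \<and> X \<Rrightarrow> X'"
proof (induct "TLam X" N arbitrary: X rule: par_red.induct)
  case (pr_qu M N A) then show ?case by (cases "A = []") (auto simp: unquotes_last)
qed auto

lemma par_Quote_inv: "Quote a X \<Rrightarrow> N \<Longrightarrow> \<exists>X'. N = Quote a X' \<and> X \<Rrightarrow> X'"
proof (induct "Quote a X" N arbitrary: X rule: par_red.induct)
  case (pr_qu M N A) then show ?case by (cases "A = []") (auto simp: unquotes_last)
qed auto

lemma par_App_inv:
  "App M1 M2 \<Rrightarrow> N \<Longrightarrow>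
     (\<exists>N1 N2. N = App N1 N2 \<and> M1 \<Rrightarrow> N1 \<and> M2 \<Rrightarrow> N2) \<or>
     (\<exists>t P P' R'. M1 = Lam t P \<and> P \<Rrightarrow> P' \<and> M2 \<Rrightarrow> R' \<and> N = subst 0 R' P')"
proof (induct "App M1 M2" N arbitrary: M1 M2 rule: par_red.induct)
  case (pr_qu M N A) then show ?case by (cases "A = []") (auto simp: unquotes_last)
qed auto

lemma par_TApp_inv:
  "TApp M1 B \<Rrightarrow> N \<Longrightarrow>
     (\<exists>N1. N = TApp N1 B \<and> M1 \<Rrightarrow> N1) \<or>
     (\<exists>P P'. M1 = TLam P \<and> P \<Rrightarrow> P' \<and> N = tv_subst 0 B P')"
proof (induct "TApp M1 B" N arbitrary: M1 rule: par_red.induct)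
  case (pr_qu M N A) then show ?case by (cases "A = []") (auto simp: unquotes_last)
qed auto

lemma par_Unquote_inv:
  "Unquote a X \<Rrightarrow> N \<Longrightarrow>
     (\<exists>X'. N = Unquote a X' \<and> X \<Rrightarrow> X') \<or>
     (\<exists>C Q. C \<noteq> [] \<and> Unquote a X = unquotes C (quotes C Q) \<and> Q \<Rrightarrow> N)"
proof (induct "Unquote a X" N arbitrary: X rule: par_red.induct)
  case (pr_qu M N A)
  then show ?case by (cases "A = []") (auto intro!: exI[of _ A] exI[of _ M])
qed auto

lemma par_qu_redex:
  "X \<Rrightarrow> N \<Longrightarrow> A \<noteq> [] \<Longrightarrow> X = unquotes A (quotes A P) \<Longrightarrow>
     \<exists>D P'. N = unquotes D (quotes D P') \<and> P \<Rrightarrow> P'"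
proof (induct arbitrary: A P rule: par_red.induct)
  case (pr_unquote M N' b)
  define B where "B = butlast A"
  have A: "A = B @ [b]"
    using pr_unquote.prems by (simp add: B_def unquotes_last)
  then have M: "M = unquotes B (quotes B (Quote b P))"
    using pr_unquote.prems by simp
  obtain D P'' where N': "N' = unquotes D (quotes D P'')" and "Quote b P \<Rrightarrow> P''"
  proof (cases "B = []")
    case True
    then show ?thesis using that[of "[]"] pr_unquote.hyps(1) M by simp
  next
    case False
    then show ?thesis using that pr_unquote.hyps(2)[OF False M] by blast
  qed
  moreover obtain P' where "P'' = Quote b P'" "P \<Rrightarrow> P'" using par_Quote_inv calculation(2) by blast
  ultimately show ?case by (intro exI[of _ "D @ [b]"] exI[of _ P']) auto
next
  case (pr_qu M N C)
  show ?case
  proof (cases "C = []")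
    case True then show ?thesis using pr_qu by simp
  next
    case False
    then have "A = C \<and> P = M" using qu_redex_unique[of A C P M] pr_qu.prems by simp
    then show ?thesis using pr_qu by (intro exI[of _ "[]"] exI[of _ N]) auto
  qed
qed (auto simp: unquotes_last)

section \<open>The diamond property\<close>

definition diamond_at :: "trm \<Rightarrow> bool" where
  "diamond_at M \<longleftrightarrow> (\<forall>N1 N2. M \<Rrightarrow> N1 \<longrightarrow> M \<Rrightarrow> N2 \<longrightarrow> (\<exists>N. N1 \<Rrightarrow> N \<and> N2 \<Rrightarrow> N))"

lemma diamond_atD: "diamond_at M \<Longrightarrow> M \<Rrightarrow> N1 \<Longrightarrow> M \<Rrightarrow> N2 \<Longrightarrow> \<exists>N. N1 \<Rrightarrow> N \<and> N2 \<Rrightarrow> N"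
  unfolding diamond_at_def by blast

lemma diamond_at_Var: "diamond_at (Var x)"
  unfolding diamond_at_def using par_Var_inv by blast

lemma diamond_at_Lam: "diamond_at X \<Longrightarrow> diamond_at (Lam t X)"
  unfolding diamond_at_def by (blast dest: par_Lam_inv intro: par_red.pr_lam)

lemma diamond_at_TLam: "diamond_at X \<Longrightarrow> diamond_at (TLam X)"
  unfolding diamond_at_def by (blast dest: par_TLam_inv intro: par_red.pr_tlam)

lemma diamond_at_Quote: "diamond_at X \<Longrightarrow> diamond_at (Quote a X)"
  unfolding diamond_at_def by (blast dest: par_Quote_inv intro: par_red.pr_quote)

text \<open>Conversely the body of an abstraction inherits the diamond property,
  because abstractions reduce only under the binder.\<close>

lemma diamond_at_Lam_body:
  assumes "diamond_at (Lam t X)" shows "diamond_at X"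
  unfolding diamond_at_def
proof (intro allI impI)
  fix N1 N2 assume "X \<Rrightarrow> N1" "X \<Rrightarrow> N2"
  then obtain N where "Lam t N1 \<Rrightarrow> N" "Lam t N2 \<Rrightarrow> N"
    using diamond_atD[OF assms] par_red.pr_lam by blast
  then show "\<exists>N. N1 \<Rrightarrow> N \<and> N2 \<Rrightarrow> N" by (auto dest!: par_Lam_inv)
qed

lemma diamond_at_TLam_body:
  assumes "diamond_at (TLam X)" shows "diamond_at X"
  unfolding diamond_at_def
proof (intro allI impI)
  fix N1 N2 assume "X \<Rrightarrow> N1" "X \<Rrightarrow> N2"
  then obtain N where "TLam N1 \<Rrightarrow> N" "TLam N2 \<Rrightarrow> N"
    using diamond_atD[OF assms] par_red.pr_tlam by blast
  then show "\<exists>N. N1 \<Rrightarrow> N \<and> N2 \<Rrightarrow> N" by (auto dest!: par_TLam_inv)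
qed

lemma join_beta:
  assumes P: "diamond_at P" and M2: "diamond_at M2"
    and "P \<Rrightarrow> P'" "M2 \<Rrightarrow> R'" and red: "App (Lam t P) M2 \<Rrightarrow> N2"
  shows "\<exists>N. subst 0 R' P' \<Rrightarrow> N \<and> N2 \<Rrightarrow> N"
  using par_App_inv[OF red]
proof (elim disjE exE conjE)
  fix B1 B2 assume N2: "N2 = App B1 B2" and "Lam t P \<Rrightarrow> B1" "M2 \<Rrightarrow> B2"
  then obtain P1 where B1: "B1 = Lam t P1" and "P \<Rrightarrow> P1" using par_Lam_inv by blast
  obtain P0 where "P' \<Rrightarrow> P0" "P1 \<Rrightarrow> P0" using diamond_atD[OF P] \<open>P \<Rrightarrow> P'\<close> \<open>P \<Rrightarrow> P1\<close> by blast
  moreover obtain R0 where "R' \<Rrightarrow> R0" "B2 \<Rrightarrow> R0" using diamond_atD[OF M2] assms(4) \<open>M2 \<Rrightarrow> B2\<close> by blast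
  ultimately show ?thesis unfolding N2 B1 by (blast intro: par_subst par_red.pr_beta)
next
  fix t2 P2 P2' R2' assume "Lam t P = Lam t2 P2" "P2 \<Rrightarrow> P2'" "M2 \<Rrightarrow> R2'" "N2 = subst 0 R2' P2'"
  moreover obtain P0 where "P' \<Rrightarrow> P0" "P2' \<Rrightarrow> P0" using diamond_atD[OF P] assms(3) calculation by auto
  moreover obtain R0 where "R' \<Rrightarrow> R0" "R2' \<Rrightarrow> R0" using diamond_atD[OF M2] assms(4) calculation by blast
  ultimately show ?thesis by (blast intro: par_subst)
qed

lemma diamond_at_App:
  assumes M1: "diamond_at M1" and M2: "diamond_at M2"
  shows "diamond_at (App M1 M2)"
  unfolding diamond_at_def
proof (intro allI impI)
  fix N1 N2 assume red1: "App M1 M2 \<Rrightarrow> N1" and red2: "App M1 M2 \<Rrightarrow> N2"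
  from par_App_inv[OF red1] show "\<exists>N. N1 \<Rrightarrow> N \<and> N2 \<Rrightarrow> N"
  proof (elim disjE exE conjE)
    fix A1 A2 assume A: "N1 = App A1 A2" "M1 \<Rrightarrow> A1" "M2 \<Rrightarrow> A2"
    from par_App_inv[OF red2] show ?thesis
    proof (elim disjE exE conjE)
      fix B1 B2 assume "N2 = App B1 B2" "M1 \<Rrightarrow> B1" "M2 \<Rrightarrow> B2"
      then show ?thesis using A M1 M2 by (blast dest: diamond_atD intro: par_red.pr_app)
    next
      fix t P P' R' assume L: "M1 = Lam t P" and "P \<Rrightarrow> P'" "M2 \<Rrightarrow> R'" "N2 = subst 0 R' P'"
      then show ?thesis
        using join_beta[OF diamond_at_Lam_body[OF M1[unfolded L]] M2 _ _ red1[unfolded L]] by blast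
    qed
  next
    fix t P P' R' assume L: "M1 = Lam t P" and "P \<Rrightarrow> P'" "M2 \<Rrightarrow> R'" "N1 = subst 0 R' P'"
    then show ?thesis
      using join_beta[OF diamond_at_Lam_body[OF M1[unfolded L]] M2 _ _ red2[unfolded L]] by blast
  qed
qed

lemma join_tbeta:
  assumes P: "diamond_at P" and "P \<Rrightarrow> P'" and red: "TApp (TLam P) B \<Rrightarrow> N2"
  shows "\<exists>N. tv_subst 0 B P' \<Rrightarrow> N \<and> N2 \<Rrightarrow> N"
  using par_TApp_inv[OF red]
proof (elim disjE exE conjE)
  fix B1 assume N2: "N2 = TApp B1 B" and "TLam P \<Rrightarrow> B1"
  then obtain P1 where B1: "B1 = TLam P1" and "P \<Rrightarrow> P1" using par_TLam_inv by blast
  obtain P0 where "P' \<Rrightarrow> P0" "P1 \<Rrightarrow> P0" using diamond_atD[OF P] assms(2) \<open>P \<Rrightarrow> P1\<close> by blast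
  then show ?thesis unfolding N2 B1 by (blast intro: par_tv_subst par_red.pr_tbeta)
next
  fix P2 P2' assume "TLam P = TLam P2" "P2 \<Rrightarrow> P2'" "N2 = tv_subst 0 B P2'"
  moreover obtain P0 where "P' \<Rrightarrow> P0" "P2' \<Rrightarrow> P0" using diamond_atD[OF P] assms(2) calculation by auto
  ultimately show ?thesis by (blast intro: par_tv_subst)
qed

lemma diamond_at_TApp:
  assumes M1: "diamond_at M1"
  shows "diamond_at (TApp M1 B)"
  unfolding diamond_at_def
proof (intro allI impI)
  fix N1 N2 assume red1: "TApp M1 B \<Rrightarrow> N1" and red2: "TApp M1 B \<Rrightarrow> N2"
  from par_TApp_inv[OF red1] show "\<exists>N. N1 \<Rrightarrow> N \<and> N2 \<Rrightarrow> N"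
  proof (elim disjE exE conjE)
    fix A1 assume A: "N1 = TApp A1 B" "M1 \<Rrightarrow> A1"
    from par_TApp_inv[OF red2] show ?thesis
    proof (elim disjE exE conjE)
      fix B1 assume "N2 = TApp B1 B" "M1 \<Rrightarrow> B1"
      then show ?thesis using A M1 by (blast dest: diamond_atD intro: par_red.pr_tapp)
    next
      fix P P' assume L: "M1 = TLam P" and "P \<Rrightarrow> P'" "N2 = tv_subst 0 B P'"
      then show ?thesis
        using join_tbeta[OF diamond_at_TLam_body[OF M1[unfolded L]] _ red1[unfolded L]] by blast
    qed
  next
    fix P P' assume L: "M1 = TLam P" and "P \<Rrightarrow> P'" "N1 = tv_subst 0 B P'"
    then show ?thesis
      using join_tbeta[OF diamond_at_TLam_body[OF M1[unfolded L]] _ red2[unfolded L]] by blast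
  qed
qed

lemma join_qu:
  assumes Q: "diamond_at Q" and C: "C \<noteq> []" and "Q \<Rrightarrow> N1"
    and red: "unquotes C (quotes C Q) \<Rrightarrow> N2"
  shows "\<exists>N. N1 \<Rrightarrow> N \<and> N2 \<Rrightarrow> N"
proof -
  obtain D Q2 where N2: "N2 = unquotes D (quotes D Q2)" and "Q \<Rrightarrow> Q2"
    using par_qu_redex[OF red C refl] by blast
  then obtain N where "N1 \<Rrightarrow> N" "Q2 \<Rrightarrow> N" using diamond_atD[OF Q \<open>Q \<Rrightarrow> N1\<close>] by blast
  then show ?thesis unfolding N2 by (blast intro: par_red.pr_qu)
qed

lemma diamond_at_Unquote:
  assumes X: "diamond_at X"
    and bodies: "\<And>C Q. C \<noteq> [] \<Longrightarrow> Unquote a X = unquotes C (quotes C Q) \<Longrightarrow> diamond_at Q"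
  shows "diamond_at (Unquote a X)"
  unfolding diamond_at_def
proof (intro allI impI)
  fix N1 N2 assume red1: "Unquote a X \<Rrightarrow> N1" and red2: "Unquote a X \<Rrightarrow> N2"
  from par_Unquote_inv[OF red1] show "\<exists>N. N1 \<Rrightarrow> N \<and> N2 \<Rrightarrow> N"
  proof (elim disjE exE conjE)
    fix X1 assume A: "N1 = Unquote a X1" "X \<Rrightarrow> X1"
    from par_Unquote_inv[OF red2] show ?thesis
    proof (elim disjE exE conjE)
      fix X2 assume "N2 = Unquote a X2" "X \<Rrightarrow> X2"
      then show ?thesis using A X by (blast dest: diamond_atD intro: par_red.pr_unquote)
    next
      fix C Q assume R: "C \<noteq> []" "Unquote a X = unquotes C (quotes C Q)" "Q \<Rrightarrow> N2"
      then show ?thesis using join_qu[OF bodies[OF R(1,2)] R(1,3)] red1 by auto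
    qed
  next
    fix C Q assume R: "C \<noteq> []" "Unquote a X = unquotes C (quotes C Q)" "Q \<Rrightarrow> N1"
    then show ?thesis using join_qu[OF bodies[OF R(1,2)] R(1,3)] red2 by auto
  qed
qed

text \<open>Every term has the diamond property, by induction on its size: the body
  of a redex inside an unquotation is smaller than the unquotation itself.\<close>

lemma diamond_at_all: "diamond_at M"
proof (induction M rule: measure_induct_rule[of size])
  case (less M)
  show ?case
  proof (cases M)
    case (Unquote a X)
    have "diamond_at Q" if "C \<noteq> []" "Unquote a X = unquotes C (quotes C Q)" for C Q
      using less.IH[of Q] that Unquote by simp
    then show ?thesis using less.IH[of X] Unquote by (simp add: diamond_at_Unquote)
  qed (use less.IH in \<open>simp_all add: diamond_at_Var diamond_at_App diamond_at_Lam
         diamond_at_TLam diamond_at_TApp diamond_at_Quote\<close>)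
qed

theorem mainTheorem6:
  assumes "M \<Rrightarrow> N1" and "M \<Rrightarrow> N2"
  shows "\<exists>N. N1 \<Rrightarrow> N \<and> N2 \<Rrightarrow> N"
  using diamond_atD[OF diamond_at_all assms] .

end
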